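(* For all $n\in\mathbb N$, \[\big((d_{T^{(n)}}(i),h_{T^{(n)}}(i)),\ i\in[n]\big)\stackrel{\mathcal L}{=}\big((d_{T_n}(\sigma(i)),h_{T_n}(\sigma(i))),\ i\in[n]\big),\] where $\sigma$ is a uniformly random permutation of $[n]$ independent of $T_n$. Consequently, jointly over all $i\in\mathbb Z$, $j\in\mathbb N$, the counts $|\{v\in[n]:d_{T_n}(v)=i,h_{T_n}(v)=j\}|$ and $|\{v\in[n]:d_{T^{(n)}}(v)=i,h_{T^{(n)}}(v)=j\}|$ have the same joint distribution.
   Context: Trees are rooted, edges directed towards the root; $d_t(v)$ is the number of children of $v$ in $t$ and $h_t(v)$ its distance to the root. $T_n$ is a random recursive tree: $T_1$ is a single root $1$, and $T_{m+1}$ is obtained from $T_m$ by attaching vertex $m+1$ to a uniformly random vertex of $[m]$, independently. Kingman's $n$-coalescent $(F_n,\dots,F_1)$ is the random sequence of forests on $[n]$ where $F_n$ has no edges and, for $2\le i\le n$, listing the trees of $F_i$ as $T^{(i)}_1,\dots,T^{(i)}_i$ in increasing order of smallest label, one chooses $\{a_i,b_i\}$ uniformly among 2-subsets of $[i]$ and an independent fair bit $\xi_i$ (independent over $i$), and obtains $F_{i-1}$ by adding an edge between the roots of $T^{(i)}_{a_i},T^{(i)}_{b_i}$ directed towards the root of $T^{(i)}_{\min(a_i,b_i)}$ if $\xi_i=1$ and towards the other root otherwise (the head becomes the root of the merged tree). $T^{(n)}$ is the unique tree of $F_1$, with its original labels in $[n]$. *)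

theory Defs
  imports "HOL-Probability.Probability"
begin

text \<open>Trees and forests on the vertex set [n] = {1..n} are encoded by parent
functions t :: nat => nat: for a vertex v, t v is the head of the edge leaving v
(its parent), and t v = 0 iff v is a root.  Values outside [n] are irrelevant.\<close>

definition deg :: "nat \<Rightarrow> (nat \<Rightarrow> nat) \<Rightarrow> nat \<Rightarrow> nat" where
  "deg n t v = card {u \<in> {1..n}. t u = v}"

definition hgt :: "(nat \<Rightarrow> nat) \<Rightarrow> nat \<Rightarrow> nat" where
  "hgt t v = (LEAST k. t ((t ^^ k) v) = 0)"

definition rootof :: "(nat \<Rightarrow> nat) \<Rightarrow> nat \<Rightarrow> nat" where
  "rootof t v = (t ^^ hgt t v) v"

definition roots :: "nat \<Rightarrow> (nat \<Rightarrow> nat) \<Rightarrow> nat set" where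
  "roots n t = {v \<in> {1..n}. t v = 0}"

definition minlab :: "nat \<Rightarrow> (nat \<Rightarrow> nat) \<Rightarrow> nat \<Rightarrow> nat" where
  "minlab n t r = Min {v \<in> {1..n}. rootof t v = r}"

definition ord_roots :: "nat \<Rightarrow> (nat \<Rightarrow> nat) \<Rightarrow> nat list" where
  "ord_roots n t = sort_key (minlab n t) (sorted_list_of_set (roots n t))"

fun rrt :: "nat \<Rightarrow> (nat \<Rightarrow> nat) pmf" where
  "rrt 0 = return_pmf (\<lambda>_. 0)"
| "rrt (Suc 0) = return_pmf (\<lambda>_. 0)"
| "rrt (Suc (Suc m)) =
     bind_pmf (rrt (Suc m)) (\<lambda>t.
     bind_pmf (pmf_of_set {1..Suc m}) (\<lambda>p.
     return_pmf (t(Suc (Suc m) := p))))"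

text \<open>One step of Kingman's coalescent: from F_i to F_(i-1).  The trees of F_i are
T_1..T_i (ordered by smallest label); {a,b} is uniform among 2-subsets of [i],
xi a fair bit; the edge joins the roots of T_a, T_b and is directed towards the
root of T_min(a,b) if xi = 1 (True), otherwise towards the other root.\<close>
definition coal_step :: "nat \<Rightarrow> nat \<Rightarrow> (nat \<Rightarrow> nat) \<Rightarrow> (nat \<Rightarrow> nat) pmf" where
  "coal_step n i t =
     bind_pmf (pmf_of_set {S. S \<subseteq> {1..i} \<and> card S = 2}) (\<lambda>S.
     bind_pmf (bernoulli_pmf (1/2)) (\<lambda>\<xi>.
       let rs = ord_roots n t;
           ra = rs ! (Min S - 1);
           rb = rs ! (Max S - 1)
       in return_pmf (if \<xi> then t(rb := ra) else t(ra := rb))))"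

text \<open>coal n k is the forest F_(n-k) (after k merge steps), starting from F_n with no edges.\<close>
fun coal :: "nat \<Rightarrow> nat \<Rightarrow> (nat \<Rightarrow> nat) pmf" where
  "coal n 0 = return_pmf (\<lambda>_. 0)"
| "coal n (Suc k) = bind_pmf (coal n k) (coal_step n (n - k))"

definition kingman_tree :: "nat \<Rightarrow> (nat \<Rightarrow> nat) pmf" where
  "kingman_tree n = coal n (n - 1)"

definition dh_vec :: "nat \<Rightarrow> (nat \<Rightarrow> nat) \<Rightarrow> (nat \<Rightarrow> nat) \<Rightarrow> (nat \<times> nat) list" where
  "dh_vec n t \<sigma> = map (\<lambda>i. (deg n t (\<sigma> i), hgt t (\<sigma> i))) [1..<Suc n]"

definition dh_counts :: "nat \<Rightarrow> (nat \<Rightarrow> nat) \<Rightarrow> int \<Rightarrow> nat \<Rightarrow> nat" where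
  "dh_counts n t i j = card {v \<in> {1..n}. int (deg n t v) = i \<and> hgt t v = j}"

end

theory Submission
  imports Defs
begin

text \<open>After k steps Kingman's coalescent is uniform on merge histories
  of length k: each step picks, uniformly, an ordered pair of distinct current roots (child, parent),
  so there are n! (n - 1)! complete histories. The random recursive tree T_n is uniform on its
  (n - 1)! attachment sequences. Reversing an attachment sequence and relabelling its vertices by
  a permutation gives a complete merge history, and this map is injective; by counting it is a
  bijection, so T^(n) has the law of T_n with uniformly permuted labels. Degrees and heights are
  transported by the relabelling, and the counts are permutation invariant.\<close>

lemma bind_pmf_of_set_Sigma:
  assumes "finite A" "A \<noteq> {}"
    and "\<And>x. x \<in> A \<Longrightarrow> finite (B x)" "\<And>x. x \<in> A \<Longrightarrow> card (B x) = m" "m > 0"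
  shows "bind_pmf (pmf_of_set A) (\<lambda>x. map_pmf (Pair x) (pmf_of_set (B x))) = pmf_of_set (Sigma A B)"
proof (rule pmf_eqI, clarify)
  fix a b
  have B_ne: "x \<in> A \<Longrightarrow> B x \<noteq> {}" for x
    using assms(4,5) by fastforce
  have fin: "finite (Sigma A B)"
    using assms by auto
  have ne: "Sigma A B \<noteq> {}"
    using assms(2) B_ne by blast
  have card_Sigma: "card (Sigma A B) = card A * m"
    using assms by (simp add: card_SigmaI)
  have "pmf (bind_pmf (pmf_of_set A) (\<lambda>x. map_pmf (Pair x) (pmf_of_set (B x)))) (a, b)
      = (\<Sum>x\<in>A. pmf (map_pmf (Pair x) (pmf_of_set (B x))) (a, b)) / card A"
    using assms(1,2) by (simp add: pmf_bind integral_pmf_of_set)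
  also have "\<dots> = (\<Sum>x\<in>A. if x = a then pmf (pmf_of_set (B x)) b else 0) / card A"
    by (intro arg_cong2[where f = "(/)"] sum.cong refl)
       (auto simp: pmf_map_inj' inj_on_def pmf_eq_0_set_pmf)
  also have "\<dots> = pmf (pmf_of_set (Sigma A B)) (a, b)"
    using assms fin ne card_Sigma B_ne by (auto simp: indicator_def)
  finally show "pmf (bind_pmf (pmf_of_set A) (\<lambda>x. map_pmf (Pair x) (pmf_of_set (B x)))) (a, b)
      = pmf (pmf_of_set (Sigma A B)) (a, b)" .
qed

lemma bind_pmf_of_set_Sigma_map:
  assumes "finite A" "A \<noteq> {}"
    and "\<And>x. x \<in> A \<Longrightarrow> finite (B x)" "\<And>x. x \<in> A \<Longrightarrow> card (B x) = m" "m > 0"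
    and "inj_on (case_prod f) (Sigma A B)"
  shows "bind_pmf (pmf_of_set A) (\<lambda>x. map_pmf (f x) (pmf_of_set (B x)))
           = pmf_of_set (case_prod f ` Sigma A B)"
proof -
  have "bind_pmf (pmf_of_set A) (\<lambda>x. map_pmf (f x) (pmf_of_set (B x)))
      = map_pmf (case_prod f) (bind_pmf (pmf_of_set A) (\<lambda>x. map_pmf (Pair x) (pmf_of_set (B x))))"
    by (simp add: map_bind_pmf pmf.map_comp o_def)
  also have "\<dots> = map_pmf (case_prod f) (pmf_of_set (Sigma A B))"
    using bind_pmf_of_set_Sigma[OF assms(1-5)] by simp
  also have "\<dots> = pmf_of_set (case_prod f ` Sigma A B)"
    using assms by (intro map_pmf_of_set_inj) (fastforce simp: card_gt_0_iff)+
  finally show ?thesis .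
qed

text \<open>Forests on [n] are recorded by their edge lists of pairs (child, parent), most recent edge
  first; a vertex that is nobody's child is a root.\<close>
definition parent_fun :: "(nat \<times> nat) list \<Rightarrow> nat \<Rightarrow> nat" where
  "parent_fun es v = (case map_of es v of None \<Rightarrow> 0 | Some q \<Rightarrow> q)"

lemma parent_fun_Nil [simp]: "parent_fun [] = (\<lambda>_. 0)"
  by (auto simp: parent_fun_def)

lemma parent_fun_Cons [simp]: "parent_fun (e # es) = (parent_fun es)(fst e := snd e)"
  by (cases e) (auto simp: parent_fun_def)

lemma parent_fun_rev:
  assumes "distinct (map fst es)"
  shows "parent_fun (rev es) = parent_fun es"
proof
  fix v
  show "parent_fun (rev es) v = parent_fun es v"
  proof (cases "v \<in> fst ` set es")
    case True
    then obtain q where "(v, q) \<in> set es" by auto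
    moreover have "distinct (map fst (rev es))"
      using assms by (simp add: rev_map[symmetric])
    ultimately show ?thesis
      using assms by (simp add: parent_fun_def map_of_is_SomeI)
  next
    case False
    then have "map_of (rev es) v = None" "map_of es v = None"
      by (simp_all add: map_of_eq_None_iff)
    then show ?thesis by (simp add: parent_fun_def)
  qed
qed

lemma parent_fun_map_prod:
  assumes "inj \<tau>" "\<tau> 0 = 0"
  shows "parent_fun (map (map_prod \<tau> \<tau>) es) (\<tau> x) = \<tau> (parent_fun es x)"
  using assms by (induction es) (auto simp: inj_eq)

fun rrt_codes :: "nat \<Rightarrow> (nat \<times> nat) list set" where
  "rrt_codes 0 = {[]}"
| "rrt_codes (Suc 0) = {[]}"
| "rrt_codes (Suc (Suc m)) = (\<lambda>(es, q). (Suc (Suc m), q) # es) ` (rrt_codes (Suc m) \<times> {1..Suc m})"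

lemma finite_rrt_codes: "finite (rrt_codes n)"
  by (induction n rule: rrt_codes.induct) auto

lemma card_rrt_codes: "card (rrt_codes n) = fact (n - 1)"
proof (induction n rule: rrt_codes.induct)
  case (3 m)
  have "inj_on (\<lambda>(es, q). (Suc (Suc m), q) # es) (rrt_codes (Suc m) \<times> {1..Suc m})"
    by (auto simp: inj_on_def)
  then have "card (rrt_codes (Suc (Suc m))) = fact m * Suc m"
    using 3 finite_rrt_codes by (simp add: card_image card_cartesian_product)
  then show ?case by (simp add: algebra_simps)
qed auto

lemma rrt_code_children: "es \<in> rrt_codes n \<Longrightarrow> map fst es = rev [2..<Suc n]"
  by (induction n arbitrary: es rule: rrt_codes.induct) auto

lemma rrt_code_parent_less: "es \<in> rrt_codes n \<Longrightarrow> (c, q) \<in> set es \<Longrightarrow> 1 \<le> q \<and> q < c"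
  by (induction n arbitrary: es rule: rrt_codes.induct) auto

lemma rrt_eq_map_pmf_of_set: "rrt n = map_pmf parent_fun (pmf_of_set (rrt_codes n))"
proof (induction n rule: rrt.induct)
  case (3 m)
  have "rrt (Suc (Suc m)) = map_pmf parent_fun (bind_pmf (pmf_of_set (rrt_codes (Suc m)))
      (\<lambda>es. map_pmf (\<lambda>q. (Suc (Suc m), q) # es) (pmf_of_set {1..Suc m})))"
    by (simp add: 3 bind_map_pmf map_bind_pmf pmf.map_comp o_def map_pmf_def[symmetric])
  also have "bind_pmf (pmf_of_set (rrt_codes (Suc m)))
      (\<lambda>es. map_pmf (\<lambda>q. (Suc (Suc m), q) # es) (pmf_of_set {1..Suc m})) = pmf_of_set (rrt_codes (Suc (Suc m)))"
    using finite_rrt_codes card_rrt_codes[of "Suc m"]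
    by (subst bind_pmf_of_set_Sigma_map[where m = "Suc m"]) (auto simp: inj_on_def)
  finally show ?case .
qed (simp_all add: pmf_of_set_singleton map_return_pmf)

definition distinct_pairs :: "'a set \<Rightarrow> ('a \<times> 'a) set" where
  "distinct_pairs A = Sigma A (\<lambda>a. A - {a})"

lemma card_distinct_pairs: "finite A \<Longrightarrow> card (distinct_pairs A) = card A * (card A - 1)"
  by (simp add: distinct_pairs_def card_SigmaI)

lemma two_subset_cases:
  fixes S :: "'a :: linorder set"
  assumes "card S = 2"
  obtains x y where "x < y" "S = {x, y}"
  using assms by (metis card_2_iff insert_commute linorder_neqE)

text \<open>The 2-subset of tree indices and the fair bit drawn in a merge step encode exactly one
  ordered pair (child index, parent index), counted from 0.\<close>
lemma merge_choice_bij: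
  fixes i :: nat
  shows "bij_betw (\<lambda>(S, \<xi>). if \<xi> then (Max S - 1, Min S - 1) else (Min S - 1, Max S - 1))
     ({S. S \<subseteq> {1..i} \<and> card S = 2} \<times> UNIV) (distinct_pairs {..<i})"
    (is "bij_betw ?f _ _")
proof (rule bij_betw_byWitness[where f' = "\<lambda>(a, b). ({Suc a, Suc b}, b < a)"])
  have choice: "(\<lambda>(a, b). ({Suc a, Suc b}, b < a)) (?f (S, \<xi>)) = (S, \<xi>) \<and> ?f (S, \<xi>) \<in> distinct_pairs {..<i}"
    if S: "S \<subseteq> {1..i}" "card S = 2" for S \<xi>
  proof -
    obtain x y where "x < y" "S = {x, y}" using S(2) by (rule two_subset_cases)
    then show ?thesis using S(1) by (cases \<xi>) (auto simp: insert_commute distinct_pairs_def)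
  qed
  then show "\<forall>z \<in> {S. S \<subseteq> {1..i} \<and> card S = 2} \<times> UNIV. (\<lambda>(a, b). ({Suc a, Suc b}, b < a)) (?f z) = z"
    and "?f ` ({S. S \<subseteq> {1..i} \<and> card S = 2} \<times> UNIV) \<subseteq> distinct_pairs {..<i}"
    by auto
qed (auto simp: distinct_pairs_def max_def min_def)

lemma bij_betw_distinct_pairs:
  assumes "bij_betw f A B"
  shows "bij_betw (map_prod f f) (distinct_pairs A) (distinct_pairs B)"
proof (rule bij_betw_subset[OF bij_betw_map_prod[OF assms assms]])
  show "distinct_pairs A \<subseteq> A \<times> A" by (auto simp: distinct_pairs_def)
  show "map_prod f f ` distinct_pairs A = distinct_pairs B"
    using assms by (force simp: distinct_pairs_def bij_betw_def inj_on_eq_iff)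
qed

lemma coal_step_eq_pmf_of_set:
  assumes "card (roots n t) = i" "i \<ge> 2"
  shows "coal_step n i t = map_pmf (\<lambda>(c, q). t(c := q)) (pmf_of_set (distinct_pairs (roots n t)))"
proof -
  define rs where "rs = ord_roots n t"
  define SS where "SS = {S :: nat set. S \<subseteq> {1..i} \<and> card S = 2}"
  define choice where
    "choice = (\<lambda>(S :: nat set, \<xi>). if \<xi> then (Max S - 1, Min S - 1) else (Min S - 1, Max S - 1))"
  have "finite (roots n t)" by (simp add: roots_def)
  then have rs: "distinct rs" "set rs = roots n t" "length rs = i"
    using assms(1) by (auto simp: rs_def ord_roots_def length_sort)
  have SS: "finite SS" "SS \<noteq> {}"
    using assms(2) by (auto simp: SS_def intro!: exI[of _ "{1, 2}"])
  have bij: "bij_betw (map_prod ((!) rs) ((!) rs) \<circ> choice) (SS \<times> UNIV) (distinct_pairs (roots n t))"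
    using merge_choice_bij[of i] bij_betw_distinct_pairs[OF bij_betw_nth[OF rs(1) refl refl]] rs
    unfolding choice_def SS_def by (auto intro: bij_betw_trans)
  have "coal_step n i t = bind_pmf (pmf_of_set SS) (\<lambda>S. map_pmf
      (\<lambda>\<xi>. (\<lambda>(c, q). t(c := q)) ((map_prod ((!) rs) ((!) rs) \<circ> choice) (S, \<xi>))) (pmf_of_set UNIV))"
    unfolding coal_step_def bernoulli_pmf_half_conv_pmf_of_set SS_def[symmetric] rs_def[symmetric]
      map_pmf_def
    by (intro bind_pmf_cong refl) (auto simp: choice_def Let_def)
  also have "\<dots> = map_pmf (\<lambda>(c, q). t(c := q)) (map_pmf (map_prod ((!) rs) ((!) rs) \<circ> choice)
      (bind_pmf (pmf_of_set SS) (\<lambda>S. map_pmf (Pair S) (pmf_of_set UNIV))))"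
    by (simp add: map_bind_pmf pmf.map_comp o_def)
  also have "bind_pmf (pmf_of_set SS) (\<lambda>S. map_pmf (Pair S) (pmf_of_set (UNIV :: bool set)))
      = pmf_of_set (SS \<times> UNIV)"
    using SS by (intro bind_pmf_of_set_Sigma[where m = 2]) auto
  also have "map_pmf (map_prod ((!) rs) ((!) rs) \<circ> choice) (pmf_of_set (SS \<times> UNIV))
      = pmf_of_set (distinct_pairs (roots n t))"
    using bij SS by (intro map_pmf_of_set_bij_betw) auto
  finally show ?thesis .
qed

text \<open>Merge histories of the coalescent, most recent merge first: each merge joins two distinct
  vertices that are not yet children, i.e. two current roots (see \<open>roots_parent_fun\<close>).\<close>
fun coal_code :: "nat \<Rightarrow> (nat \<times> nat) list \<Rightarrow> bool" where
  "coal_code n [] = True"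
| "coal_code n ((c, q) # es) = (coal_code n es \<and> (c, q) \<in> distinct_pairs ({1..n} - fst ` set es))"

definition coal_codes :: "nat \<Rightarrow> nat \<Rightarrow> (nat \<times> nat) list set" where
  "coal_codes n k = {es. coal_code n es \<and> length es = k}"

lemma coal_codes_0: "coal_codes n 0 = {[]}"
  by (auto simp: coal_codes_def)

lemma coal_codes_Suc:
  "coal_codes n (Suc k) =
     (\<lambda>(es, e). e # es) ` Sigma (coal_codes n k) (\<lambda>es. distinct_pairs ({1..n} - fst ` set es))"
  by (fastforce simp: coal_codes_def length_Suc_conv)

lemma finite_coal_codes: "finite (coal_codes n k)"
  by (induction k) (auto simp: coal_codes_0 coal_codes_Suc distinct_pairs_def)

lemma coal_code_children: "coal_code n es \<Longrightarrow> distinct (map fst es) \<and> set es \<subseteq> {1..n} \<times> {1..n}"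
  by (induction es rule: coal_code.induct) (auto simp: distinct_pairs_def)

lemma card_free_vertices: "coal_code n es \<Longrightarrow> card ({1..n} - fst ` set es) = n - length es"
  using coal_code_children[of n es]
  by (subst card_Diff_subset) (auto simp: distinct_card[of "map fst es", simplified])

lemma roots_parent_fun: "coal_code n es \<Longrightarrow> roots n (parent_fun es) = {1..n} - fst ` set es"
  by (induction es rule: coal_code.induct) (auto simp: roots_def distinct_pairs_def)

text \<open>There are (n - k)(n - k - 1) choices for merge number k + 1; the product is stated
  multiplicatively to avoid division on \<^typ>\<open>nat\<close>.\<close>
lemma card_coal_codes:
  "k < n \<Longrightarrow> card (coal_codes n k) * fact (n - k) * fact (n - k - 1) = (fact n * fact (n - 1) :: nat)"
proof (induction k)
  case (Suc k)
  have "inj_on (\<lambda>(es, e). e # es) (Sigma (coal_codes n k) (\<lambda>es. distinct_pairs ({1..n} - fst ` set es)))"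
    by (auto simp: inj_on_def)
  moreover have "card (distinct_pairs ({1..n} - fst ` set es)) = (n - k) * (n - k - 1)"
    if "es \<in> coal_codes n k" for es
    using that card_free_vertices by (simp add: card_distinct_pairs coal_codes_def)
  ultimately have "card (coal_codes n (Suc k)) = card (coal_codes n k) * ((n - k) * (n - k - 1))"
    by (simp add: coal_codes_Suc card_image card_SigmaI finite_coal_codes distinct_pairs_def)
  then have "card (coal_codes n (Suc k)) * fact (n - Suc k) * fact (n - Suc k - 1)
      = card (coal_codes n k) * ((n - k) * fact (n - Suc k)) * ((n - k - 1) * fact (n - Suc k - 1))"
    by (simp only: mult_ac)
  also have "\<dots> = card (coal_codes n k) * fact (n - k) * fact (n - k - 1)"
  proof -
    have "n - k = Suc (n - Suc k)" "n - k - 1 = Suc (n - Suc k - 1)"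
      using Suc.prems by simp_all
    then show ?thesis by (metis fact_Suc of_nat_id)
  qed
  also have "\<dots> = fact n * fact (n - 1)"
    using Suc by simp
  finally show ?case .
qed (simp add: coal_codes_0)

lemma coal_eq_map_pmf_of_set: "k < n \<Longrightarrow> coal n k = map_pmf parent_fun (pmf_of_set (coal_codes n k))"
proof (induction k)
  case 0
  then show ?case by (simp add: coal_codes_0 pmf_of_set_singleton map_return_pmf)
next
  case (Suc k)
  let ?pairs = "\<lambda>es. distinct_pairs ({1..n} - fst ` set es)"
  have codes: "finite (coal_codes n k)" "coal_codes n k \<noteq> {}"
    using card_coal_codes[of k n] Suc.prems by (auto simp: finite_coal_codes)
  have step: "coal_step n (n - k) (parent_fun es) = map_pmf parent_fun (map_pmf (\<lambda>e. e # es) (pmf_of_set (?pairs es)))"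
    if "es \<in> coal_codes n k" for es
    using that Suc.prems card_free_vertices[of n es]
    by (subst coal_step_eq_pmf_of_set)
       (auto simp: coal_codes_def roots_parent_fun card_free_vertices pmf.map_comp o_def case_prod_unfold)
  have "coal n (Suc k) = bind_pmf (pmf_of_set (coal_codes n k)) (\<lambda>es. coal_step n (n - k) (parent_fun es))"
    using Suc by (simp add: bind_map_pmf)
  also have "\<dots> = bind_pmf (pmf_of_set (coal_codes n k))
      (\<lambda>es. map_pmf parent_fun (map_pmf (\<lambda>e. e # es) (pmf_of_set (?pairs es))))"
    using codes step by (intro bind_pmf_cong) auto
  also have "\<dots> = map_pmf parent_fun (bind_pmf (pmf_of_set (coal_codes n k))
      (\<lambda>es. map_pmf (\<lambda>e. e # es) (pmf_of_set (?pairs es))))"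
    by (simp add: map_bind_pmf)
  also have "bind_pmf (pmf_of_set (coal_codes n k)) (\<lambda>es. map_pmf (\<lambda>e. e # es) (pmf_of_set (?pairs es)))
      = pmf_of_set (coal_codes n (Suc k))"
    unfolding coal_codes_Suc using codes Suc.prems card_free_vertices
    by (subst bind_pmf_of_set_Sigma_map[where m = "(n - k) * (n - k - 1)"])
       (auto simp: card_distinct_pairs coal_codes_def distinct_pairs_def inj_on_def)
  finally show ?case .
qed

lemma permutes_image_Collect: "\<sigma> permutes S \<Longrightarrow> \<sigma> ` {x \<in> S. P (\<sigma> x)} = {v \<in> S. P v}"
  using permutes_image[of \<sigma> S] by auto

lemma deg_conjugate:
  assumes \<tau>: "\<tau> permutes {1..n}" and conj: "\<And>x. s (\<tau> x) = \<tau> (t x)"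
  shows "deg n s (\<tau> v) = deg n t v"
proof -
  have "{x \<in> {1..n}. s (\<tau> x) = \<tau> v} = {x \<in> {1..n}. t x = v}"
    using conj permutes_inj[OF \<tau>] by (simp add: inj_eq)
  then have "{u \<in> {1..n}. s u = \<tau> v} = \<tau> ` {x \<in> {1..n}. t x = v}"
    using permutes_image_Collect[OF \<tau>, of "\<lambda>u. s u = \<tau> v"] by simp
  then show ?thesis
    unfolding deg_def using permutes_inj[OF \<tau>] by (simp add: card_image inj_on_subset)
qed

lemma hgt_conjugate:
  assumes \<tau>: "\<tau> permutes {1..n}" and conj: "\<And>x. s (\<tau> x) = \<tau> (t x)"
  shows "hgt s (\<tau> v) = hgt t v"
proof -
  have iter: "(s ^^ k) (\<tau> v) = \<tau> ((t ^^ k) v)" for k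
    by (induction k) (simp_all add: conj)
  have "\<tau> y = 0 \<longleftrightarrow> y = 0" for y
    using \<tau> permutes_inj[OF \<tau>] by (metis atLeastAtMost_iff injD not_one_le_zero permutes_not_in)
  then show ?thesis
    unfolding hgt_def by (simp add: iter conj)
qed

text \<open>Read backwards, the attachments of vertices n, n - 1, ..., 2 in a random recursive tree form a
  merge history: when vertex k attaches to q < k, both are still roots of the forest built from
  vertices k, ..., n.\<close>
definition relabel :: "(nat \<Rightarrow> nat) \<Rightarrow> (nat \<times> nat) list \<Rightarrow> (nat \<times> nat) list" where
  "relabel \<tau> es = map (map_prod \<tau> \<tau>) (rev es)"

lemma parent_fun_relabel:
  assumes "\<tau> permutes {1..n}" "distinct (map fst es)"
  shows "parent_fun (relabel \<tau> es) (\<tau> x) = \<tau> (parent_fun es x)"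
proof -
  have "\<tau> 0 = 0"
    using assms(1) by (simp add: permutes_not_in)
  then show ?thesis
    using assms parent_fun_map_prod[OF permutes_inj[OF assms(1)]]
    by (simp add: relabel_def parent_fun_rev)
qed

lemma map_prod_in_distinct_pairs_image:
  "inj f \<Longrightarrow> (f a, f b) \<in> distinct_pairs (f ` A) \<longleftrightarrow> (a, b) \<in> distinct_pairs A"
  by (auto simp: distinct_pairs_def inj_eq)

lemma coal_code_map_permutes:
  assumes \<tau>: "\<tau> permutes {1..n}"
  shows "coal_code n es \<Longrightarrow> coal_code n (map (map_prod \<tau> \<tau>) es)"
proof (induction es)
  case (Cons e es)
  obtain c q where e: "e = (c, q)" by fastforce
  have free: "{1..n} - fst ` set (map (map_prod \<tau> \<tau>) es) = \<tau> ` ({1..n} - fst ` set es)"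
    using permutes_inj[OF \<tau>] permutes_image[OF \<tau>] by (simp add: image_set_diff image_image)
  show ?case
    using Cons map_prod_in_distinct_pairs_image[OF permutes_inj[OF \<tau>]]
    unfolding e list.map map_prod_simp coal_code.simps free by simp
qed simp

lemma coal_code_snoc:
  "coal_code n (es @ [(c, q)]) \<longleftrightarrow>
     coal_code n es \<and> (c, q) \<in> distinct_pairs {1..n} \<and> c \<notin> fst ` set es \<and> c \<notin> snd ` set es"
  by (induction es rule: coal_code.induct) (auto simp: distinct_pairs_def)

lemma coal_code_rev_rrt_code: "es \<in> rrt_codes m \<Longrightarrow> m \<le> n \<Longrightarrow> coal_code n (rev es)"
proof (induction m arbitrary: es rule: rrt_codes.induct)
  case (3 m)
  then obtain es' q where es: "es = (Suc (Suc m), q) # es'" "es' \<in> rrt_codes (Suc m)" "q \<in> {1..Suc m}"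
    by auto
  have "fst ` set es' = {2..Suc m}"
    using arg_cong[OF rrt_code_children[OF es(2)], of set] by auto
  then have "c < Suc (Suc m) \<and> q' < Suc (Suc m)" if "(c, q') \<in> set es'" for c q'
  proof -
    have "c \<in> {2..Suc m}"
      using that \<open>fst ` set es' = {2..Suc m}\<close> by (metis fst_conv image_eqI)
    then show ?thesis
      using rrt_code_parent_less[OF es(2) that] by simp
  qed
  then show ?case
    using 3 es by (force simp: coal_code_snoc distinct_pairs_def)
qed simp_all

lemma permutes_eq_if_eq_off_point:
  assumes \<sigma>: "\<sigma> permutes S" and \<sigma>': "\<sigma>' permutes S" and eq: "\<And>x. x \<in> S - {a} \<Longrightarrow> \<sigma> x = \<sigma>' x"
  shows "\<sigma> = \<sigma>'"
proof
  fix x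
  show "\<sigma> x = \<sigma>' x"
  proof (cases "x \<in> S - {a}")
    case False
    show ?thesis
    proof (cases "x \<in> S")
      case True
      then obtain y where y: "y \<in> S" "\<sigma>' y = \<sigma> x"
        using permutes_in_image[OF \<sigma>] permutes_image[OF \<sigma>'] by (metis imageE)
      have "x = a" using False True by blast
      moreover have "y = a"
      proof (rule ccontr)
        assume "y \<noteq> a"
        then have "\<sigma> y = \<sigma> x" using eq y by auto
        then show False using \<open>y \<noteq> a\<close> \<open>x = a\<close> permutes_inj[OF \<sigma>] by (metis injD)
      qed
      ultimately show ?thesis using y by simp
    qed (use \<sigma> \<sigma>' in \<open>simp add: permutes_not_in\<close>)
  qed (use eq in simp)
qed

lemma inj_on_relabel_inv:
  "inj_on (\<lambda>(es, \<sigma>). relabel (inv \<sigma>) es) (rrt_codes n \<times> {\<sigma>. \<sigma> permutes {1..n}})"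
proof (rule inj_onI, clarify)
  fix es \<sigma> es' \<sigma>'
  assume es: "es \<in> rrt_codes n" "es' \<in> rrt_codes n"
    and \<sigma>: "\<sigma> permutes {1..n}" "\<sigma>' permutes {1..n}"
    and eq: "relabel (inv \<sigma>) es = relabel (inv \<sigma>') es'"
  have "map fst (relabel \<tau> es) = map \<tau> (rev (map fst es))" for \<tau> es
    by (simp add: relabel_def rev_map)
  then have "map (inv \<sigma>) [2..<Suc n] = map (inv \<sigma>') [2..<Suc n]"
    using arg_cong[OF eq, of "map fst"] rrt_code_children[OF es(1)] rrt_code_children[OF es(2)]
    by (simp del: upt_Suc)
  then have "inv \<sigma> = inv \<sigma>'"
    using \<sigma> by (intro permutes_eq_if_eq_off_point[where a = 1] permutes_inv)
      (auto simp: map_eq_conv simp del: upt_Suc)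
  then have "\<sigma> = \<sigma>'"
    using \<sigma> by (metis permutes_inv_inv)
  moreover have "inj (map_prod (inv \<sigma>) (inv \<sigma>))"
    using permutes_inj[OF permutes_inv[OF \<sigma>(1)]] by (simp add: prod.inj_map)
  then have "es = es'"
    using eq \<open>\<sigma> = \<sigma>'\<close> by (simp add: relabel_def inj_map_eq_map)
  ultimately show "es = es' \<and> \<sigma> = \<sigma>'" by simp
qed

lemma bij_betw_relabel_inv:
  assumes "n \<ge> 1"
  shows "bij_betw (\<lambda>(es, \<sigma>). relabel (inv \<sigma>) es)
           (rrt_codes n \<times> {\<sigma>. \<sigma> permutes {1..n}}) (coal_codes n (n - 1))"
proof -
  let ?f = "\<lambda>(es, \<sigma>). relabel (inv \<sigma>) es" and ?D = "rrt_codes n \<times> {\<sigma>. \<sigma> permutes {1..n}}"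
  have "?f ` ?D \<subseteq> coal_codes n (n - 1)"
  proof clarify
    fix es \<sigma> assume es: "es \<in> rrt_codes n" and \<sigma>: "\<sigma> permutes {1..n}"
    have "coal_code n (relabel (inv \<sigma>) es)"
      unfolding relabel_def
      using coal_code_map_permutes[OF permutes_inv[OF \<sigma>] coal_code_rev_rrt_code[OF es order.refl]] .
    moreover have "length es = n - 1"
      using arg_cong[OF rrt_code_children[OF es], of length] by (simp del: upt_Suc)
    ultimately show "relabel (inv \<sigma>) es \<in> coal_codes n (n - 1)"
      by (simp add: coal_codes_def relabel_def)
  qed
  moreover have "card (?f ` ?D) = card (coal_codes n (n - 1))"
    using card_coal_codes[of "n - 1" n] assms inj_on_relabel_inv[of n]
    by (simp add: card_image card_cartesian_product card_rrt_codes card_permutations)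
  ultimately have "?f ` ?D = coal_codes n (n - 1)"
    by (rule card_subset_eq[OF finite_coal_codes])
  then show ?thesis
    using inj_on_relabel_inv by (simp add: bij_betw_def)
qed

lemma dh_vec_relabel_inv:
  assumes \<sigma>: "\<sigma> permutes {1..n}" and es: "es \<in> rrt_codes n"
  shows "dh_vec n (parent_fun (relabel (inv \<sigma>) es)) id = dh_vec n (parent_fun es) \<sigma>"
proof -
  have \<tau>: "inv \<sigma> permutes {1..n}"
    using \<sigma> by (rule permutes_inv)
  have "distinct (map fst es)"
    using rrt_code_children[OF es] by simp
  with \<tau> have conj: "parent_fun (relabel (inv \<sigma>) es) (inv \<sigma> x) = inv \<sigma> (parent_fun es x)" for x
    by (rule parent_fun_relabel)
  have "inv \<sigma> (\<sigma> i) = i" for i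
    using \<sigma> by (simp add: permutes_inverses)
  then have "deg n (parent_fun (relabel (inv \<sigma>) es)) i = deg n (parent_fun es) (\<sigma> i)"
    and "hgt (parent_fun (relabel (inv \<sigma>) es)) i = hgt (parent_fun es) (\<sigma> i)" for i
    using deg_conjugate[where s = "parent_fun (relabel (inv \<sigma>) es)", OF \<tau> conj, of "\<sigma> i"]
      hgt_conjugate[where s = "parent_fun (relabel (inv \<sigma>) es)", OF \<tau> conj, of "\<sigma> i"]
    by simp_all
  then show ?thesis
    by (simp add: dh_vec_def)
qed

definition list_dh_counts :: "(nat \<times> nat) list \<Rightarrow> int \<Rightarrow> nat \<Rightarrow> nat" where
  "list_dh_counts xs i j = length (filter (\<lambda>(d, h). int d = i \<and> h = j) xs)"

lemma list_dh_counts_dh_vec: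
  assumes \<sigma>: "\<sigma> permutes {1..n}"
  shows "list_dh_counts (dh_vec n t \<sigma>) = dh_counts n t"
proof (intro ext)
  fix i j
  define P where "P = (\<lambda>v. int (deg n t v) = i \<and> hgt t v = j)"
  have "list_dh_counts (dh_vec n t \<sigma>) i j = card {x \<in> {1..n}. P (\<sigma> x)}"
    by (simp add: list_dh_counts_def dh_vec_def P_def comp_def case_prod_unfold distinct_length_filter
        Int_def conj_commute less_Suc_eq_le del: upt_Suc)
  also have "\<dots> = card {v \<in> {1..n}. P v}"
  proof (rule bij_betw_same_card)
    show "bij_betw \<sigma> {x \<in> {1..n}. P (\<sigma> x)} {v \<in> {1..n}. P v}"
      using permutes_imp_bij[OF \<sigma>]
    proof (rule bij_betw_subset)
      show "\<sigma> ` {x \<in> {1..n}. P (\<sigma> x)} = {v \<in> {1..n}. P v}"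
        by (rule permutes_image_Collect[OF \<sigma>])
    qed auto
  qed
  finally show "list_dh_counts (dh_vec n t \<sigma>) i j = dh_counts n t i j"
    by (simp add: dh_counts_def P_def)
qed

lemma rrt_codes_nonempty: "rrt_codes n \<noteq> {}"
  using card_rrt_codes[of n] by (metis card.empty fact_nonzero)

lemma set_pmf_of_set_permutations:
  assumes "finite S"
  shows "set_pmf (pmf_of_set {\<sigma>. \<sigma> permutes S}) = {\<sigma>. \<sigma> permutes S}"
proof (rule set_pmf_of_set)
  show "{\<sigma>. \<sigma> permutes S} \<noteq> {}"
    using permutes_id by blast
qed (use assms finite_permutations in blast)

lemma finite_rrt_codes_times_permutations:
  "finite (rrt_codes n \<times> {\<sigma>. \<sigma> permutes {1..n}})" "rrt_codes n \<times> {\<sigma>. \<sigma> permutes {1..n}} \<noteq> {}"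
  using finite_rrt_codes rrt_codes_nonempty finite_permutations[of "{1..n}"] permutes_id[of "{1..n}"]
  by blast+

lemma kingman_tree_dh_vec:
  assumes "n \<ge> 1"
  shows "map_pmf (\<lambda>t. dh_vec n t id) (kingman_tree n) =
           map_pmf (\<lambda>(es, \<sigma>). dh_vec n (parent_fun es) \<sigma>) (pmf_of_set (rrt_codes n \<times> {\<sigma>. \<sigma> permutes {1..n}}))"
proof -
  let ?D = "rrt_codes n \<times> {\<sigma>. \<sigma> permutes {1..n}}"
  have "kingman_tree n = map_pmf parent_fun (pmf_of_set (coal_codes n (n - 1)))"
    unfolding kingman_tree_def using assms by (intro coal_eq_map_pmf_of_set) simp
  also have "pmf_of_set (coal_codes n (n - 1)) = map_pmf (\<lambda>(es, \<sigma>). relabel (inv \<sigma>) es) (pmf_of_set ?D)"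
    using map_pmf_of_set_bij_betw[OF bij_betw_relabel_inv[OF assms] finite_rrt_codes_times_permutations(2,1)]
    by simp
  finally have "map_pmf (\<lambda>t. dh_vec n t id) (kingman_tree n) =
      map_pmf (\<lambda>(es, \<sigma>). dh_vec n (parent_fun (relabel (inv \<sigma>) es)) id) (pmf_of_set ?D)"
    by (simp add: pmf.map_comp comp_def case_prod_unfold)
  also have "\<dots> = map_pmf (\<lambda>(es, \<sigma>). dh_vec n (parent_fun es) \<sigma>) (pmf_of_set ?D)"
    using finite_rrt_codes_times_permutations
    by (intro map_pmf_cong refl) (auto simp: dh_vec_relabel_inv)
  finally show ?thesis .
qed

lemma rrt_dh_vec_relabelled:
  "bind_pmf (rrt n) (\<lambda>t. bind_pmf (pmf_of_set {\<sigma>. \<sigma> permutes {1..n}}) (\<lambda>\<sigma>. return_pmf (dh_vec n t \<sigma>))) =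
     map_pmf (\<lambda>(es, \<sigma>). dh_vec n (parent_fun es) \<sigma>) (pmf_of_set (rrt_codes n \<times> {\<sigma>. \<sigma> permutes {1..n}}))"
proof -
  have "bind_pmf (rrt n) (\<lambda>t. bind_pmf (pmf_of_set {\<sigma>. \<sigma> permutes {1..n}}) (\<lambda>\<sigma>. return_pmf (dh_vec n t \<sigma>)))
      = map_pmf (\<lambda>(es, \<sigma>). dh_vec n (parent_fun es) \<sigma>)
          (bind_pmf (pmf_of_set (rrt_codes n)) (\<lambda>es. map_pmf (Pair es) (pmf_of_set {\<sigma>. \<sigma> permutes {1..n}})))"
    by (simp add: rrt_eq_map_pmf_of_set bind_map_pmf map_bind_pmf pmf.map_comp comp_def
        map_pmf_def[symmetric])
  also have "bind_pmf (pmf_of_set (rrt_codes n)) (\<lambda>es. map_pmf (Pair es) (pmf_of_set {\<sigma>. \<sigma> permutes {1..n}}))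
      = pmf_of_set (rrt_codes n \<times> {\<sigma>. \<sigma> permutes {1..n}})"
    using finite_rrt_codes rrt_codes_nonempty finite_permutations[of "{1..n}"]
    by (intro bind_pmf_of_set_Sigma[where m = "fact n"]) (auto simp: card_permutations)
  finally show ?thesis .
qed

theorem corollary2p3:
  fixes n :: nat
  assumes "n \<ge> 1"
  shows "map_pmf (\<lambda>t. dh_vec n t id) (kingman_tree n) =
           bind_pmf (rrt n) (\<lambda>t.
           bind_pmf (pmf_of_set {\<sigma>. \<sigma> permutes {1..n}}) (\<lambda>\<sigma>.
           return_pmf (dh_vec n t \<sigma>)))
       \<and> map_pmf (dh_counts n) (rrt n) = map_pmf (dh_counts n) (kingman_tree n)"
proof
  show vec: "map_pmf (\<lambda>t. dh_vec n t id) (kingman_tree n) =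
      bind_pmf (rrt n) (\<lambda>t. bind_pmf (pmf_of_set {\<sigma>. \<sigma> permutes {1..n}}) (\<lambda>\<sigma>. return_pmf (dh_vec n t \<sigma>)))"
    using kingman_tree_dh_vec[OF assms] rrt_dh_vec_relabelled by simp
  have "map_pmf (dh_counts n) (kingman_tree n) = map_pmf list_dh_counts (map_pmf (\<lambda>t. dh_vec n t id) (kingman_tree n))"
    by (simp add: pmf.map_comp comp_def list_dh_counts_dh_vec[OF permutes_id])
  also have "\<dots> = bind_pmf (rrt n) (\<lambda>t. bind_pmf (pmf_of_set {\<sigma>. \<sigma> permutes {1..n}})
      (\<lambda>\<sigma>. return_pmf (list_dh_counts (dh_vec n t \<sigma>))))"
    unfolding vec by (simp add: map_bind_pmf map_return_pmf)
  also have "\<dots> = bind_pmf (rrt n) (\<lambda>t. bind_pmf (pmf_of_set {\<sigma>. \<sigma> permutes {1..n}})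
      (\<lambda>_. return_pmf (dh_counts n t)))"
    by (intro bind_pmf_cong refl) (simp add: set_pmf_of_set_permutations list_dh_counts_dh_vec)
  also have "\<dots> = map_pmf (dh_counts n) (rrt n)"
    by (simp add: map_pmf_def)
  finally show "map_pmf (dh_counts n) (rrt n) = map_pmf (dh_counts n) (kingman_tree n)" ..
qed

end
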